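(* Let $\theta>1$, let $\eta^n\in\Omega_n$ be arbitrary deterministic configurations, $t\in[0,T]$ and $\lambda>0$. Then $$\limsup_{n\to\infty}\frac1n\log\mathbb P_{\delta_{\eta^n}}\big[\tfrac1nJ^n_{0,1}(t)>\lambda\big]=\limsup_{n\to\infty}\frac1n\log\mathbb P_{\delta_{\eta^n}}\big[\tfrac1nJ^n_{n-1,n}(t)>\lambda\big]=-\infty.$$
   Context: Model: $\Sigma_n=\{1,\dots,n-1\}$, $\Omega_n=\{0,1\}^{\Sigma_n}$, $\alpha,\beta\in(0,1)$, $r_1=\alpha,r_{n-1}=\beta$, $T>0$; $\mathbb P_{\delta_{\eta^n}}$ is the law of the Markov process on $[0,T]$ with generator $n^2\mathcal L_n$, $(\mathcal L_nf)(\eta)=\sum_{x=1}^{n-2}[f(\eta^{x,x+1})-f(\eta)]+n^{-\theta}\sum_{x\in\{1,n-1\}}[r_x(1-\eta(x))+(1-r_x)\eta(x)][f(\sigma^x\eta)-f(\eta)]$ ($\sigma^x\eta$ flips the value at $x$: creation of a particle if $\eta(x)=0$, removal if $\eta(x)=1$), started at $\eta^n$. $J^n_{0,1}(t)$ is the number of particles created at site $1$ minus the number of particles removed at site $1$ (via the boundary flips) during $[0,t]$; $J^n_{n-1,n}(t)$ is the number of particles removed at site $n-1$ minus the number created at site $n-1$ during $[0,t]$. *)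

theory Defs
  imports "HOL-Probability.Probability"
begin

text \<open>Configurations on \<Sigma>_n = {1..n-1} are represented as functions nat \<Rightarrow> bool
  (values outside {1..n-1} are never read nor changed by the dynamics).
  The augmented state is (configuration, J_{0,1}, J_{n-1,n}).\<close>

type_synonym cfg = "nat \<Rightarrow> bool"
type_synonym sst = "cfg \<times> int \<times> int"

definition swap_cfg :: "nat \<Rightarrow> cfg \<Rightarrow> cfg" where
  "swap_cfg x \<eta> = \<eta>(x := \<eta> (Suc x), Suc x := \<eta> x)"

definition flip_cfg :: "nat \<Rightarrow> cfg \<Rightarrow> cfg" where
  "flip_cfg x \<eta> = \<eta>(x := \<not> \<eta> x)"

text \<open>Boundary move; left = True is the term at site 1 (rate r_1 = alpha),
  left = False the term at site n-1 (rate r_{n-1} = beta).  Given that the boundary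
  clock of that term rings (rate n^(2-theta)), the flip happens with probability
  r(1-eta(x)) + (1-r) eta(x).  Creation at site 1 adds 1 to J_{0,1}, removal subtracts 1;
  removal at site n-1 adds 1 to J_{n-1,n}, creation subtracts 1.\<close>

definition bnd_step :: "nat \<Rightarrow> real \<Rightarrow> real \<Rightarrow> bool \<Rightarrow> sst \<Rightarrow> sst pmf" where
  "bnd_step n \<alpha> \<beta> left s =
     (case s of (\<eta>, a, b) \<Rightarrow>
       (let x = (if left then 1 else n - 1);
            r = (if left then \<alpha> else \<beta>);
            c = (if \<eta> x then 1 - r else r);
            d = (if \<eta> x then (-1::int) else 1);
            s' = (flip_cfg x \<eta>, (if left then a + d else a), (if left then b else b - d))
        in map_pmf (\<lambda>f. if f then s' else s) (bernoulli_pmf c)))"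

text \<open>Total clock rate of the uniformized chain: n^2 * unif_M n theta, where
  unif_M n theta = (n-2) + 2 n^(-theta)  (n-2 bulk bonds of rate n^2, two boundary
  clocks of rate n^(2-theta)).\<close>

definition unif_M :: "nat \<Rightarrow> real \<Rightarrow> real" where
  "unif_M n \<theta> = real (n - 2) + 2 * real n powr (-\<theta>)"

definition unif_rate :: "nat \<Rightarrow> real \<Rightarrow> real" where
  "unif_rate n \<theta> = (real n)\<^sup>2 * unif_M n \<theta>"

definition jump_step :: "nat \<Rightarrow> real \<Rightarrow> real \<Rightarrow> real \<Rightarrow> sst \<Rightarrow> sst pmf" where
  "jump_step n \<theta> \<alpha> \<beta> s =
     bind_pmf (bernoulli_pmf (2 * real n powr (-\<theta>) / unif_M n \<theta>))
       (\<lambda>bd. if bd then bind_pmf (bernoulli_pmf (1/2)) (\<lambda>l. bnd_step n \<alpha> \<beta> l s)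
             else map_pmf (\<lambda>x. case s of (\<eta>, a, b) \<Rightarrow> (swap_cfg x \<eta>, a, b))
                    (pmf_of_set {1..n-2}))"

definition jump_iter :: "nat \<Rightarrow> real \<Rightarrow> real \<Rightarrow> real \<Rightarrow> nat \<Rightarrow> sst \<Rightarrow> sst pmf" where
  "jump_iter n \<theta> \<alpha> \<beta> k s = ((\<lambda>p. bind_pmf p (jump_step n \<theta> \<alpha> \<beta>)) ^^ k) (return_pmf s)"

text \<open>Law at time t of the Markov process with generator n^2 L_n started from
  (eta, 0, 0), via uniformization (exact for bounded rates):
  P[X_t \<in> A] = \<Sum>_k e^{-\<Lambda> t} (\<Lambda> t)^k / k! * P[Y_k \<in> A].\<close>

definition proc_prob :: "nat \<Rightarrow> real \<Rightarrow> real \<Rightarrow> real \<Rightarrow> cfg \<Rightarrow> real \<Rightarrow> sst set \<Rightarrow> real" where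
  "proc_prob n \<theta> \<alpha> \<beta> \<eta> t A =
     (\<Sum>k. exp (- unif_rate n \<theta> * t) * (unif_rate n \<theta> * t) ^ k / fact k
           * measure_pmf.prob (jump_iter n \<theta> \<alpha> \<beta> k (\<eta>, 0, 0)) A)"

definition elog :: "real \<Rightarrow> ereal" where
  "elog p = (if p \<le> 0 then -\<infinity> else ereal (ln p))"

end

theory Submission
  imports Defs
begin

text \<open>Exponential Chebyshev bound. Every jump of the uniformized chain is a boundary jump at a
  given side with probability \<open>n\<^sup>-\<^sup>\<theta> / unif_M\<close>, and only such a jump can change the current
  through that side, by at most one. Hence \<open>exp (K J)\<close> grows by at most the factor
  \<open>1 + n\<^sup>-\<^sup>\<theta> / unif_M (e\<^sup>K - 1)\<close> per jump, and averaging over the Poisson number of jumps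
  gives \<open>E exp (K J(t)) \<le> exp (n\<^sup>2\<^sup>-\<^sup>\<theta> t (e\<^sup>K - 1))\<close>. Therefore
  \<open>P[J(t) > \<lambda> n] \<le> exp (n\<^sup>2\<^sup>-\<^sup>\<theta> t (e\<^sup>K - 1) - K \<lambda> n)\<close>; since \<open>\<theta> > 1\<close> the first term is
  \<open>o(n)\<close>, so the limsup of \<open>1/n\<close> times the log-probability is at most \<open>-K \<lambda>\<close> for every \<open>K > 0\<close>.\<close>

lemma nn_integral_funpow_bind_pmf_le:
  fixes F :: "'a \<Rightarrow> ennreal" and N :: "'a \<Rightarrow> 'a pmf"
  assumes step: "\<And>s. (\<integral>\<^sup>+s'. F s' \<partial>N s) \<le> c * F s"
  shows "(\<integral>\<^sup>+s. F s \<partial>(((\<lambda>p. bind_pmf p N) ^^ k) (return_pmf s0))) \<le> c ^ k * F s0"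
proof (induction k)
  case 0
  show ?case by simp
next
  case (Suc k)
  let ?P = "((\<lambda>p. bind_pmf p N) ^^ k) (return_pmf s0)"
  have "(\<integral>\<^sup>+s. F s \<partial>bind_pmf ?P N) = (\<integral>\<^sup>+s. (\<integral>\<^sup>+s'. F s' \<partial>N s) \<partial>?P)"
    by simp
  also have "\<dots> \<le> (\<integral>\<^sup>+s. c * F s \<partial>?P)"
    by (intro nn_integral_mono step)
  also have "\<dots> = c * (\<integral>\<^sup>+s. F s \<partial>?P)"
    by (simp add: nn_integral_cmult)
  also have "\<dots> \<le> c * (c ^ k * F s0)"
    by (intro mult_left_mono Suc.IH) simp
  finally show ?case by (simp add: mult.assoc)
qed

lemma nn_integral_measure_pmf_le_bound:
  assumes "\<And>x. x \<in> set_pmf N \<Longrightarrow> f x \<le> B"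
  shows "(\<integral>\<^sup>+x. f x \<partial>measure_pmf N) \<le> B"
proof -
  have "(\<integral>\<^sup>+x. f x \<partial>measure_pmf N) \<le> (\<integral>\<^sup>+x. B \<partial>measure_pmf N)"
    by (intro nn_integral_mono_AE AE_pmfI assms)
  then show ?thesis by (simp add: measure_pmf.emeasure_space_1)
qed

lemma nn_integral_bind_bernoulli_pmf_le:
  fixes N :: "bool \<Rightarrow> 'a pmf"
  assumes p: "0 \<le> p" "p \<le> 1" and ab: "0 \<le> a" "0 \<le> b"
    and "(\<integral>\<^sup>+x. f x \<partial>N True) \<le> ennreal a" and "(\<integral>\<^sup>+x. f x \<partial>N False) \<le> ennreal b"
  shows "(\<integral>\<^sup>+x. f x \<partial>bind_pmf (bernoulli_pmf p) N) \<le> ennreal (p * a + (1 - p) * b)"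
proof -
  have "(\<integral>\<^sup>+x. f x \<partial>bind_pmf (bernoulli_pmf p) N)
      = (\<integral>\<^sup>+x. f x \<partial>N True) * ennreal p + (\<integral>\<^sup>+x. f x \<partial>N False) * ennreal (1 - p)"
    using p by simp
  also have "\<dots> \<le> ennreal a * ennreal p + ennreal b * ennreal (1 - p)"
    using assms by (intro add_mono mult_right_mono) auto
  also have "\<dots> = ennreal (p * a + (1 - p) * b)"
    using p ab by (simp add: ennreal_mult ennreal_plus mult.commute)
  finally show ?thesis .
qed

lemma poisson_mixture_geometric_le:
  fixes x c E :: real and P :: "nat \<Rightarrow> real"
  assumes x: "0 \<le> x" and P: "\<And>k. 0 \<le> P k" "\<And>k. P k \<le> c ^ k * E"
  shows "(\<Sum>k. exp (- x) * x ^ k / fact k * P k) \<le> E * exp (x * (c - 1))"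
proof -
  define g where "g k = exp (- x) * E * ((x * c) ^ k / fact k)" for k
  have "(\<lambda>k. (x * c) ^ k / fact k) sums exp (x * c)"
    using exp_converges[of "x * c"] by (simp add: divide_inverse mult_ac)
  then have g: "g sums (exp (- x) * E * exp (x * c))"
    unfolding g_def by (rule sums_mult)
  have le: "exp (- x) * x ^ k / fact k * P k \<le> g k" for k
  proof -
    have "exp (- x) * x ^ k / fact k * P k \<le> exp (- x) * x ^ k / fact k * (c ^ k * E)"
      using P x by (intro mult_left_mono) auto
    then show ?thesis by (simp add: g_def power_mult_distrib mult_ac)
  qed
  have "summable (\<lambda>k. exp (- x) * x ^ k / fact k * P k)"
    by (rule summable_comparison_test'[OF sums_summable[OF g]]) (use le P x in simp)
  then have "(\<Sum>k. exp (- x) * x ^ k / fact k * P k) \<le> suminf g"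
    using le g by (intro suminf_le sums_summable[OF g])
  also have "\<dots> = E * exp (x * (c - 1))"
    using sums_unique[OF g] by (simp add: right_diff_distrib mult_ac flip: exp_add)
  finally show ?thesis .
qed

lemma elog_le_ereal:
  assumes "p \<le> exp y"
  shows "elog p \<le> ereal y"
proof (cases "p \<le> 0")
  case False
  then have "ln p \<le> ln (exp y)"
    using assms by (intro ln_mono) auto
  with False show ?thesis by (simp add: elog_def)
qed (simp add: elog_def)

lemma limsup_elog_scaled_eq_MInfty:
  fixes p :: "nat \<Rightarrow> real"
  assumes "\<And>K. K > 0 \<Longrightarrow> \<exists>a. a \<longlonglongrightarrow> 0 \<and> (\<forall>\<^sub>F n in sequentially. p n \<le> exp (real n * (a n - K)))"
  shows "limsup (\<lambda>n. ereal (1 / real n) * elog (p n)) = -\<infinity>"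
proof -
  have bound: "limsup (\<lambda>n. ereal (1 / real n) * elog (p n)) \<le> ereal (- K)" if K: "K > 0" for K
  proof -
    obtain a where a: "a \<longlonglongrightarrow> 0" and ev: "\<forall>\<^sub>F n in sequentially. p n \<le> exp (real n * (a n - K))"
      using assms[OF K] by blast
    have "\<forall>\<^sub>F n in sequentially. ereal (1 / real n) * elog (p n) \<le> ereal (a n - K)"
      using ev eventually_gt_at_top[of 0]
    proof eventually_elim
      case (elim n)
      then have "ereal (1 / real n) * elog (p n) \<le> ereal (1 / real n) * ereal (real n * (a n - K))"
        by (intro ereal_mult_left_mono elog_le_ereal) auto
      then show ?case using elim by simp
    qed
    then have "limsup (\<lambda>n. ereal (1 / real n) * elog (p n)) \<le> limsup (\<lambda>n. ereal (a n - K))"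
      by (rule Limsup_mono)
    also have "\<dots> = ereal (- K)"
    proof -
      have "(\<lambda>n. a n - K) \<longlonglongrightarrow> 0 - K"
        using a by (intro tendsto_diff tendsto_const)
      then show ?thesis
        by (intro lim_imp_Limsup trivial_limit_sequentially) (simp add: tendsto_ereal)
    qed
    finally show ?thesis .
  qed
  show ?thesis
  proof (cases "limsup (\<lambda>n. ereal (1 / real n) * elog (p n))")
    case (real r)
    with bound[of "\<bar>r\<bar> + 1"] have "r \<le> - \<bar>r\<bar> - 1" by simp
    then show ?thesis by linarith
  next
    case PInf
    with bound[of 1] show ?thesis by simp
  qed
qed

definition current :: "bool \<Rightarrow> sst \<Rightarrow> int" where
  "current left s = (if left then fst (snd s) else snd (snd s))"

definition current_mgf_factor :: "nat \<Rightarrow> real \<Rightarrow> real \<Rightarrow> real" where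
  "current_mgf_factor n \<theta> K = 1 + real n powr (- \<theta>) / unif_M n \<theta> * (exp K - 1)"

lemma unif_M_ge:
  assumes "n \<ge> 3"
  shows "unif_M n \<theta> \<ge> 1 + 2 * real n powr (- \<theta>)"
  using assms unfolding unif_M_def by auto

lemma unif_M_pos: "n \<ge> 3 \<Longrightarrow> unif_M n \<theta> > 0"
  using unif_M_ge[of n \<theta>] powr_ge_zero[of "real n" "- \<theta>"] by linarith

lemma current_mgf_factor_ge_1:
  assumes "n \<ge> 3" and "K \<ge> 0"
  shows "current_mgf_factor n \<theta> K \<ge> 1"
  using unif_M_pos[OF assms(1), of \<theta>] assms(2) by (simp add: current_mgf_factor_def)

lemma unif_rate_mult_current_mgf_factor:
  assumes "n \<ge> 3"
  shows "unif_rate n \<theta> * (current_mgf_factor n \<theta> K - 1) = real n powr (2 - \<theta>) * (exp K - 1)"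
proof -
  have "real n powr (2 - \<theta>) = (real n)\<^sup>2 * real n powr (- \<theta>)"
    using assms by (simp add: powr_diff powr_minus divide_inverse)
  then show ?thesis
    using unif_M_pos[OF assms, of \<theta>] by (simp add: unif_rate_def current_mgf_factor_def)
qed

lemma current_bnd_step_le:
  assumes "s' \<in> set_pmf (bnd_step n \<alpha> \<beta> l s)"
  shows "current side s' \<le> current side s + (if l = side then 1 else 0)"
proof -
  obtain \<eta> a b where s: "s = (\<eta>, a, b)" by (cases s) auto
  show ?thesis using assms unfolding s bnd_step_def Let_def
    by (auto simp: current_def split: if_splits)
qed

lemma exp_current_bnd_step_le:
  fixes K :: real
  assumes "K \<ge> 0"
  shows "(\<integral>\<^sup>+s'. ennreal (exp (K * current side s')) \<partial>bnd_step n \<alpha> \<beta> l s)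
    \<le> ennreal (exp (K * current side s) * (if l = side then exp K else 1))"
proof (rule nn_integral_measure_pmf_le_bound)
  fix s' assume s': "s' \<in> set_pmf (bnd_step n \<alpha> \<beta> l s)"
  have "real_of_int (current side s') \<le> current side s + (if l = side then 1 else 0)"
    using current_bnd_step_le[OF s', of side] by (cases "l = side") auto
  then have "K * current side s' \<le> K * (current side s + (if l = side then 1 else 0))"
    using assms by (rule mult_left_mono)
  then show "ennreal (exp (K * current side s'))
      \<le> ennreal (exp (K * current side s) * (if l = side then exp K else 1))"
    by (auto intro!: ennreal_leI simp: distrib_left simp flip: exp_add)
qed

lemma exp_current_jump_step_le:
  fixes K :: real
  assumes n: "n \<ge> 3" and K: "K \<ge> 0"
  shows "(\<integral>\<^sup>+s'. ennreal (exp (K * current side s')) \<partial>jump_step n \<theta> \<alpha> \<beta> s)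
    \<le> ennreal (current_mgf_factor n \<theta> K) * ennreal (exp (K * current side s))"
proof -
  define G where "G = exp (K * current side s)"
  define p where "p = 2 * real n powr (- \<theta>) / unif_M n \<theta>"
  have M: "unif_M n \<theta> \<ge> 1 + 2 * real n powr (- \<theta>)" and M_pos: "unif_M n \<theta> > 0"
    using unif_M_ge[OF n] unif_M_pos[OF n, of \<theta>] .
  then have p: "0 \<le> p" "p \<le> 1"
    unfolding p_def by (auto simp: divide_le_eq)
  have G: "G > 0" by (simp add: G_def)
  have boundary: "(\<integral>\<^sup>+s'. ennreal (exp (K * current side s'))
      \<partial>bind_pmf (bernoulli_pmf (1/2)) (\<lambda>l. bnd_step n \<alpha> \<beta> l s)) \<le> ennreal (G * (exp K + 1) / 2)"
  proof -
    have "(\<integral>\<^sup>+s'. ennreal (exp (K * current side s'))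
        \<partial>bind_pmf (bernoulli_pmf (1/2)) (\<lambda>l. bnd_step n \<alpha> \<beta> l s))
      \<le> ennreal (1/2 * (G * (if True = side then exp K else 1))
                 + (1 - 1/2) * (G * (if False = side then exp K else 1)))"
      unfolding G_def using K by (intro nn_integral_bind_bernoulli_pmf_le exp_current_bnd_step_le) auto
    also have "\<dots> = ennreal (G * (exp K + 1) / 2)"
      by (cases side) (simp_all add: field_simps)
    finally show ?thesis .
  qed
  have bulk: "(\<integral>\<^sup>+s'. ennreal (exp (K * current side s'))
      \<partial>map_pmf (\<lambda>x. case s of (\<eta>, a, b) \<Rightarrow> (swap_cfg x \<eta>, a, b)) (pmf_of_set {1..n - 2}))
      \<le> ennreal G"
    by (rule nn_integral_measure_pmf_le_bound) (auto simp: G_def current_def split: prod.splits)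
  have "(\<integral>\<^sup>+s'. ennreal (exp (K * current side s')) \<partial>jump_step n \<theta> \<alpha> \<beta> s)
      \<le> ennreal (p * (G * (exp K + 1) / 2) + (1 - p) * G)"
    unfolding jump_step_def p_def[symmetric]
    by (rule nn_integral_bind_bernoulli_pmf_le) (use p G boundary bulk in auto)
  also have "p * (G * (exp K + 1) / 2) + (1 - p) * G = current_mgf_factor n \<theta> K * G"
    unfolding p_def current_mgf_factor_def using M_pos by (simp add: field_simps)
  finally show ?thesis
    using G current_mgf_factor_ge_1[OF n K, of \<theta>] by (simp add: G_def ennreal_mult')
qed

lemma jump_iter_current_gt_prob_le:
  fixes K lam :: real
  assumes n: "n \<ge> 3" and K: "K > 0"
  shows "measure_pmf.prob (jump_iter n \<theta> \<alpha> \<beta> k init) {s. real_of_int (current side s) / real n > lam}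
    \<le> current_mgf_factor n \<theta> K ^ k * exp (K * (current side init - lam * n))"
proof -
  let ?P = "jump_iter n \<theta> \<alpha> \<beta> k init"
  let ?c = "current_mgf_factor n \<theta> K"
  have c: "?c \<ge> 1" using current_mgf_factor_ge_1 n K by simp
  have iter: "(\<integral>\<^sup>+s. ennreal (exp (K * current side s)) \<partial>?P)
      \<le> ennreal ?c ^ k * ennreal (exp (K * current side init))"
    unfolding jump_iter_def
    by (rule nn_integral_funpow_bind_pmf_le exp_current_jump_step_le[OF n less_imp_le[OF K]])+
  have "{s. real_of_int (current side s) / real n > lam} \<subseteq> {s \<in> UNIV. real_of_int (current side s) \<ge> lam * n}"
    using n by (auto simp: pos_less_divide_eq)
  then have "emeasure (measure_pmf ?P) {s. real_of_int (current side s) / real n > lam}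
      \<le> emeasure (measure_pmf ?P) {s \<in> UNIV. real_of_int (current side s) \<ge> lam * n}"
    by (rule emeasure_mono) simp
  also have "\<dots> \<le> ennreal (exp (- K * (lam * n)))
      * (\<integral>\<^sup>+s. ennreal (exp (K * current side s)) * indicator UNIV s \<partial>?P)"
    using K by (intro Chernoff_ineq_nn_integral_ge) auto
  also have "\<dots> \<le> ennreal (exp (- K * (lam * n))) * (ennreal ?c ^ k * ennreal (exp (K * current side init)))"
    using iter by (intro mult_left_mono) simp_all
  also have "\<dots> = ennreal (exp (- K * (lam * n)) * (?c ^ k * exp (K * current side init)))"
    using c by (simp add: ennreal_power ennreal_mult)
  also have "exp (- K * (lam * n)) * (?c ^ k * exp (K * current side init))
      = ?c ^ k * exp (K * (current side init - lam * n))"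
    by (simp add: right_diff_distrib exp_diff exp_minus field_simps)
  finally show ?thesis
    using c by (simp add: measure_pmf.emeasure_eq_measure)
qed

lemma proc_prob_current_gt_le:
  fixes K lam :: real
  assumes n: "n \<ge> 3" and K: "K > 0" and t: "t \<ge> 0"
  shows "proc_prob n \<theta> \<alpha> \<beta> \<eta> t {s. real_of_int (current side s) / real n > lam}
    \<le> exp (real n powr (2 - \<theta>) * t * (exp K - 1) - K * lam * n)"
proof -
  let ?x = "unif_rate n \<theta> * t"
  have "?x \<ge> 0"
    using unif_M_pos[OF n, of \<theta>] t by (simp add: unif_rate_def)
  have "proc_prob n \<theta> \<alpha> \<beta> \<eta> t {s. real_of_int (current side s) / real n > lam}
      = (\<Sum>k. exp (- ?x) * ?x ^ k / fact k
          * measure_pmf.prob (jump_iter n \<theta> \<alpha> \<beta> k (\<eta>, 0, 0)) {s. real_of_int (current side s) / real n > lam})"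
    by (simp add: proc_prob_def)
  also have "\<dots> \<le> exp (K * (- lam * n)) * exp (?x * (current_mgf_factor n \<theta> K - 1))"
  proof (intro poisson_mixture_geometric_le)
    show "measure_pmf.prob (jump_iter n \<theta> \<alpha> \<beta> k (\<eta>, 0, 0)) {s. real_of_int (current side s) / real n > lam}
        \<le> current_mgf_factor n \<theta> K ^ k * exp (K * (- lam * n))" for k
      by (rule order.trans[OF jump_iter_current_gt_prob_le[OF n K]]) (simp add: current_def)
  qed (use \<open>?x \<ge> 0\<close> in simp_all)
  also have "\<dots> = exp (real n powr (2 - \<theta>) * t * (exp K - 1) - K * lam * n)"
    using unif_rate_mult_current_mgf_factor[OF n, of \<theta> K] by (simp add: mult_ac flip: exp_add)
  finally show ?thesis .
qed

lemma limsup_current_gt_eq_MInfty: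
  fixes \<theta> t lam :: real
  assumes \<theta>: "\<theta> > 1" and t: "t \<ge> 0" and lam: "lam > 0"
  shows "limsup (\<lambda>n. ereal (1 / real n) * elog (proc_prob n \<theta> \<alpha> \<beta> (\<eta>n n) t
           {s. real_of_int (current side s) / real n > lam})) = -\<infinity>"
proof (rule limsup_elog_scaled_eq_MInfty)
  fix K :: real assume K: "K > 0"
  define a where "a n = real n powr (1 - \<theta>) * t * (exp (K / lam) - 1)" for n :: nat
  have "(\<lambda>n. real n powr (1 - \<theta>)) \<longlonglongrightarrow> 0"
    using \<theta> by (intro tendsto_neg_powr filterlim_real_sequentially) simp
  then have "a \<longlonglongrightarrow> 0"
    unfolding a_def by (intro tendsto_mult_left_zero)
  moreover have "\<forall>\<^sub>F n in sequentially. proc_prob n \<theta> \<alpha> \<beta> (\<eta>n n) t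
      {s. real_of_int (current side s) / real n > lam} \<le> exp (real n * (a n - K))"
    using eventually_ge_at_top[of 3]
  proof eventually_elim
    case (elim n)
    have "proc_prob n \<theta> \<alpha> \<beta> (\<eta>n n) t {s. real_of_int (current side s) / real n > lam}
        \<le> exp (real n powr (2 - \<theta>) * t * (exp (K / lam) - 1) - K / lam * lam * n)"
      using elim K lam t by (intro proc_prob_current_gt_le) auto
    also have "real n powr (2 - \<theta>) = real n * real n powr (1 - \<theta>)"
      using elim by (simp add: powr_diff powr_numeral power2_eq_square)
    finally show ?case
      using lam by (simp add: a_def algebra_simps)
  qed
  ultimately show "\<exists>a. a \<longlonglongrightarrow> 0 \<and> (\<forall>\<^sub>F n in sequentially. proc_prob n \<theta> \<alpha> \<beta> (\<eta>n n) t
      {s. real_of_int (current side s) / real n > lam} \<le> exp (real n * (a n - K)))"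
    by blast
qed

theorem mainTheorem9:
  fixes \<theta> \<alpha> \<beta> T t lam :: real and \<eta>n :: "nat \<Rightarrow> cfg"
  assumes "\<theta> > 1" and "0 < \<alpha>" and "\<alpha> < 1" and "0 < \<beta>" and "\<beta> < 1"
    and "T > 0" and "0 \<le> t" and "t \<le> T" and "lam > 0"
  shows "limsup (\<lambda>n. ereal (1 / real n) * elog (proc_prob n \<theta> \<alpha> \<beta> (\<eta>n n) t
             {s. real_of_int (fst (snd s)) / real n > lam})) = -\<infinity>
       \<and> limsup (\<lambda>n. ereal (1 / real n) * elog (proc_prob n \<theta> \<alpha> \<beta> (\<eta>n n) t
             {s. real_of_int (snd (snd s)) / real n > lam})) = -\<infinity>"
  using limsup_current_gt_eq_MInfty[of \<theta> t lam \<alpha> \<beta> \<eta>n True]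
    limsup_current_gt_eq_MInfty[of \<theta> t lam \<alpha> \<beta> \<eta>n False] assms
  by (simp add: current_def)

end
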